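(* Consider a linear pentapod of Type 1 or Type 2 with fixed geometric parameters $A\neq0$, $C$, $a_r$, $a_c\neq0$, $a_4$, and any leg parameters satisfying (SM1)–(SM2). For real $t$, let $\mathfrak p_t$ denote the point of $\mathfrak p$ with parameter $t$, and let $\mathbf P_t=\Big(\frac{A(a_r^2+a_c^2-ta_r)}{(t-a_r)^2+a_c^2},\,-\frac{Aa_ct}{(t-a_r)^2+a_c^2},\,\frac{Ca_4}{a_4-t}\Big)^T$. Let $\mathfrak C$ be the point $\mathbf P_c$ with $c=\frac{a_4^2-a_c^2-a_r^2}{2(a_4-a_r)}$ if $a_4\neq a_r$, and $\mathfrak C=\mathfrak M_5=(0,0,0)$ if $a_4=a_r$. Then for every $t\in\mathbb R\setminus\{a_4\}$, in every real pose of the self-motion the image of $\mathfrak p_t$ lies on the ellipsoid of rotation with center $\mathfrak C$, axis of rotation parallel to the $z$-axis of the fixed frame, semi-axis $|a_4-t|$ along this axis and equator radius $\sqrt{(a_r-t)^2+a_c^2}$; moreover $\mathfrak p_t$ runs on a sphere centered at $\mathbf P_t$ (a plane if $\mathbf P_t$ is ideal). For $t=a_4$, the image of $\mathfrak p_{a_4}$ lies in the plane $z=p_4$ on a circular disc centered at $\mathfrak C$. For $a_4\neq a_r$ the only one of these ellipsoids that is a sphere is the one for $t=c$; for $a_4=a_r$ none is a sphere.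
   Context: Euclidean displacements $\mathbf x\mapsto \mathbf R\mathbf x+\mathbf s$ (rows $\mathbf r_j$ of $\mathbf R$). Fixed frame: $\mathfrak M_5=(0,0,0)$, $\mathfrak M_1=(A,0,C)$, $A\ne0$; $\mathfrak M_2,\mathfrak M_3,\mathfrak M_4$ ideal points in directions $(1,i,0)^T,(1,-i,0)^T,(0,0,1)^T$. Platform line $\mathfrak p$: point with parameter $t$ is $\mathbf n+(t-a_r)\mathbf d$ ($\mathbf d$ unit vector); $\mathfrak m_j$ has parameter $a_j$ with $a_1=0$, $a_2=a_r+ia_c$, $a_3=a_r-ia_c$, $a_4\in\mathbb R$, $a_r,a_c\in\mathbb R$, $a_c\ne0$. Leg constraints: $\|\mathbf R\mathbf m_1+\mathbf s-\mathbf M_1\|^2=R_1^2$; $(s_1+\mathbf r_1\mathbf m_2)-i(s_2+\mathbf r_2\mathbf m_2)=p_2$; $(s_1+\mathbf r_1\mathbf m_3)+i(s_2+\mathbf r_2\mathbf m_3)=p_3$; $s_3+\mathbf r_3\mathbf m_4=p_4$; $(\mathbf R\mathbf d)\cdot(\mathbf s+\mathbf R(\mathbf n+(p_5-a_r)\mathbf d))=0$. With $v=a_2+a_3-2a_4$, $w=a_2a_3-a_4^2$, the self-motion conditions are (SM1) $p_2=\frac{Aa_3v}{(a_3-a_4)^2}$, $p_3=\frac{Aa_2v}{(a_2-a_4)^2}$, $p_4=-\frac{Ca_4v}{(a_2-a_4)(a_3-a_4)}$ and (SM2) $(a_2-a_4)^2(a_3-a_4)^2[2wp_5-vR_1^2-(2w-va_4)a_4]+vw^2(A^2+C^2)=0$;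 the self-motion is the one-parameter set of poses of $\mathfrak p$ satisfying all five constraints. Type 1: $a_4\ne0\ne C$; Type 2: $a_4=0=C$. *)

theory Defs
  imports "HOL-Analysis.Analysis"
begin

definition vec3 :: "'a \<Rightarrow> 'a \<Rightarrow> 'a \<Rightarrow> 'a^3" where
  "vec3 x y z = (\<chi> i. if i = 1 then x else if i = 2 then y else z)"

definition cdot :: "real^3 \<Rightarrow> complex^3 \<Rightarrow> complex" where
  "cdot r m = (\<Sum>i\<in>UNIV. complex_of_real (r $ i) * m $ i)"

text \<open>Point of the platform line with (possibly complex) parameter t:
  n + (t - a_r) d.\<close>
definition cline_pt :: "real^3 \<Rightarrow> real^3 \<Rightarrow> real \<Rightarrow> complex \<Rightarrow> complex^3" where
  "cline_pt n d ar t = (\<chi> i. complex_of_real (n $ i) + (t - complex_of_real ar) * complex_of_real (d $ i))"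

definition line_pt :: "real^3 \<Rightarrow> real^3 \<Rightarrow> real \<Rightarrow> real \<Rightarrow> real^3" where
  "line_pt n d ar t = n + (t - ar) *\<^sub>R d"

text \<open>Real pose (Rot, s) of the self-motion: Rot a proper rotation and all five
  leg constraints hold. Parameters a_1 = 0, a_2 = a_r + i a_c, a_3 = a_r - i a_c, a_4.\<close>
definition in_self_motion ::
  "real \<Rightarrow> real \<Rightarrow> real \<Rightarrow> real \<Rightarrow> real \<Rightarrow> real^3 \<Rightarrow> real^3 \<Rightarrow>
   real \<Rightarrow> complex \<Rightarrow> complex \<Rightarrow> real \<Rightarrow> real \<Rightarrow> real^3^3 \<Rightarrow> real^3 \<Rightarrow> bool" where
  "in_self_motion A C ar ac a4 n d R1 p2 p3 p4 p5 Rot s \<longleftrightarrow>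
     orthogonal_matrix Rot \<and> det Rot = 1 \<and>
     (let a2 = Complex ar ac; a3 = Complex ar (- ac);
          m1 = line_pt n d ar 0; m2 = cline_pt n d ar a2; m3 = cline_pt n d ar a3;
          m4 = line_pt n d ar a4 in
       (norm (Rot *v m1 + s - vec3 A 0 C))\<^sup>2 = R1\<^sup>2 \<and>
       (complex_of_real (s $ 1) + cdot (Rot $ 1) m2) - \<i> * (complex_of_real (s $ 2) + cdot (Rot $ 2) m2) = p2 \<and>
       (complex_of_real (s $ 1) + cdot (Rot $ 1) m3) + \<i> * (complex_of_real (s $ 2) + cdot (Rot $ 2) m3) = p3 \<and>
       s $ 3 + (Rot $ 3) \<bullet> m4 = p4 \<and>
       (Rot *v d) \<bullet> (s + Rot *v (n + (p5 - ar) *\<^sub>R d)) = 0)"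

definition rot_ellipsoid :: "real^3 \<Rightarrow> real \<Rightarrow> real \<Rightarrow> (real^3) set" where
  "rot_ellipsoid ctr h rho =
     {x. ((x $ 1 - ctr $ 1)\<^sup>2 + (x $ 2 - ctr $ 2)\<^sup>2) / rho\<^sup>2 + (x $ 3 - ctr $ 3)\<^sup>2 / h\<^sup>2 = 1}"

definition Ppt :: "real \<Rightarrow> real \<Rightarrow> real \<Rightarrow> real \<Rightarrow> real \<Rightarrow> real \<Rightarrow> real^3" where
  "Ppt A C ar ac a4 t =
     vec3 (A * (ar\<^sup>2 + ac\<^sup>2 - t * ar) / ((t - ar)\<^sup>2 + ac\<^sup>2))
          (- (A * ac * t / ((t - ar)\<^sup>2 + ac\<^sup>2)))
          (C * a4 / (a4 - t))"

definition center_pt :: "real \<Rightarrow> real \<Rightarrow> real \<Rightarrow> real \<Rightarrow> real \<Rightarrow> real^3" where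
  "center_pt A C ar ac a4 =
     (if a4 \<noteq> ar then Ppt A C ar ac a4 ((a4\<^sup>2 - ac\<^sup>2 - ar\<^sup>2) / (2 * (a4 - ar))) else 0)"

end

theory Submission
  imports Defs
begin

text \<open>In a real pose write the image of \<open>\<frak>p\<^sub>t\<close> as \<open>q + (t - a\<^sub>r) e\<close> with the unit
  vector \<open>e = R d\<close>. The leg equation of \<open>\<frak>m\<^sub>2\<close> (that of \<open>\<frak>m\<^sub>3\<close> is its conjugate) fixes
  the horizontal part and that of \<open>\<frak>m\<^sub>4\<close> the height, so that
  \<open>\<frak>p\<^sub>t = (Re p\<^sub>2, -Im p\<^sub>2, p\<^sub>4) + ((t - a\<^sub>r) e\<^sub>1 - a\<^sub>c e\<^sub>2, (t - a\<^sub>r) e\<^sub>2 + a\<^sub>c e\<^sub>1, (t - a\<^sub>4) e\<^sub>3)\<close>: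
  the unit sphere, rotated and scaled by \<open>(t - a\<^sub>r) + i a\<^sub>c\<close> in the horizontal plane and
  scaled by \<open>t - a\<^sub>4\<close> along the axis. This is the ellipsoid of rotation (a disc for
  \<open>t = a\<^sub>4\<close>), and (SM1) identifies its center \<open>(Re p\<^sub>2, -Im p\<^sub>2, p\<^sub>4)\<close> with \<open>\<frak>C\<close>.
  Expanding \<open>|P\<^sub>t - \<frak>p\<^sub>t|\<^sup>2\<close>, the leg equations of \<open>\<frak>m\<^sub>1\<close> and \<open>\<frak>m\<^sub>5\<close> together with
  \<open>|e| = 1\<close> eliminate the terms quadratic in \<open>e\<close>, and \<open>P\<^sub>t\<close> is exactly the point for
  which the terms linear in \<open>e\<close> cancel as well. Finally, an ellipsoid of rotation is a
  sphere iff its two semi-axes agree, and \<open>(a\<^sub>4 - t)\<^sup>2 = (a\<^sub>r - t)\<^sup>2 + a\<^sub>c\<^sup>2\<close> is linear in \<open>t\<close>.\<close>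

lemma vec3_nth [simp]: "vec3 x y z $ 1 = x" "vec3 x y z $ 2 = y" "vec3 x y z $ 3 = z"
  by (simp_all add: vec3_def)

lemma dist_vec3_sq: "(dist x y)\<^sup>2 = (x$1 - y$1)\<^sup>2 + (x$2 - y$2)\<^sup>2 + (x$3 - y$3)\<^sup>2"
  for x y :: "real^3"
  unfolding dist_norm power2_norm_eq_inner inner_vec_def sum_3 by (simp add: power2_eq_square)

lemma norm_orthogonal_matrix_mult:
  assumes "orthogonal_matrix (Q :: real^'n^'n)"
  shows "norm (Q *v x) = norm x"
proof -
  have "orthogonal_transformation ((*v) Q)"
    using assms by (simp add: orthogonal_transformation_matrix matrix_vector_mul_linear matrix_of_matrix_vector_mul)
  then show ?thesis by (simp add: orthogonal_transformation_norm)
qed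

lemma cdot_cline_pt:
  "cdot r (cline_pt n d ar t) = of_real (r \<bullet> n) + (t - of_real ar) * of_real (r \<bullet> d)"
  by (simp add: cdot_def cline_pt_def sum_3 inner_vec_def algebra_simps)

lemma sum_sq_rotation_scaling:
  "(u * e1 - v * e2)\<^sup>2 + (u * e2 + v * e1)\<^sup>2 = (u\<^sup>2 + v\<^sup>2) * (e1\<^sup>2 + e2\<^sup>2)"
  for u v e1 e2 :: real
  by (simp add: power2_eq_square algebra_simps)

lemma rot_ellipsoid_memI:
  assumes "e1\<^sup>2 + e2\<^sup>2 + e3\<^sup>2 = 1" "h \<noteq> 0" "u\<^sup>2 + v\<^sup>2 \<noteq> 0"
  shows "ctr + vec3 (u * e1 - v * e2) (u * e2 + v * e1) (h * e3)
           \<in> rot_ellipsoid ctr \<bar>h\<bar> (sqrt (u\<^sup>2 + v\<^sup>2))"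
proof -
  have "u\<^sup>2 + v\<^sup>2 > 0" using assms(3) by (simp add: add_nonneg_pos order_le_neq_trans)
  then show ?thesis
    using assms unfolding rot_ellipsoid_def
    by (simp add: sum_sq_rotation_scaling power_mult_distrib)
qed

lemma dist_rotation_scaling_le:
  assumes "e1\<^sup>2 + e2\<^sup>2 + e3\<^sup>2 = 1"
  shows "dist (ctr + vec3 (u * e1 - v * e2) (u * e2 + v * e1) 0) ctr \<le> sqrt (u\<^sup>2 + v\<^sup>2)"
proof (rule real_le_rsqrt)
  have "(dist (ctr + vec3 (u * e1 - v * e2) (u * e2 + v * e1) 0) ctr)\<^sup>2 = (u\<^sup>2 + v\<^sup>2) * (e1\<^sup>2 + e2\<^sup>2)"
    by (simp add: dist_vec3_sq sum_sq_rotation_scaling)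
  also have "\<dots> \<le> (u\<^sup>2 + v\<^sup>2) * 1"
    using assms zero_le_power2[of e3] by (intro mult_left_mono) (linarith, simp)
  finally show "(dist (ctr + vec3 (u * e1 - v * e2) (u * e2 + v * e1) 0) ctr)\<^sup>2 \<le> u\<^sup>2 + v\<^sup>2"
    by simp
qed

lemma rot_ellipsoid_eq_sphere:
  assumes "r > 0"
  shows "rot_ellipsoid ctr r r = sphere ctr r"
proof (rule set_eqI)
  fix x
  have "x \<in> rot_ellipsoid ctr r r \<longleftrightarrow> (dist ctr x)\<^sup>2 = r\<^sup>2"
    using assms unfolding rot_ellipsoid_def dist_vec3_sq
    by (simp add: add_divide_distrib[symmetric] power2_commute) auto
  also have "\<dots> \<longleftrightarrow> x \<in> sphere ctr r"
    using assms by (simp add: power2_eq_iff_nonneg)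
  finally show "x \<in> rot_ellipsoid ctr r r \<longleftrightarrow> x \<in> sphere ctr r" .
qed

lemma rot_ellipsoid_eq_sphere_imp_axes_eq:
  assumes "h > 0" "\<rho> > 0" and eq: "rot_ellipsoid ctr h \<rho> = sphere c r"
  shows "h = \<rho>"
proof -
  have on_sphere: "(c$1 - x)\<^sup>2 + (c$2 - y)\<^sup>2 + (c$3 - z)\<^sup>2 = r\<^sup>2"
    if "((x - ctr$1)\<^sup>2 + (y - ctr$2)\<^sup>2) / \<rho>\<^sup>2 + (z - ctr$3)\<^sup>2 / h\<^sup>2 = 1" for x y z
  proof -
    have "vec3 x y z \<in> sphere c r"
      using that eq[symmetric] by (simp add: rot_ellipsoid_def)
    then show ?thesis using dist_vec3_sq[of c "vec3 x y z"] by simp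
  qed
  \<comment> \<open>The vertices \<open>ctr \<plusminus> \<rho> e\<^sub>1\<close> and \<open>ctr \<plusminus> h e\<^sub>3\<close> are equidistant from \<open>c\<close>.\<close>
  have "(c$1 - (ctr$1 + \<rho>))\<^sup>2 + (c$2 - ctr$2)\<^sup>2 + (c$3 - ctr$3)\<^sup>2 = r\<^sup>2"
       "(c$1 - (ctr$1 - \<rho>))\<^sup>2 + (c$2 - ctr$2)\<^sup>2 + (c$3 - ctr$3)\<^sup>2 = r\<^sup>2"
       "(c$1 - ctr$1)\<^sup>2 + (c$2 - ctr$2)\<^sup>2 + (c$3 - (ctr$3 + h))\<^sup>2 = r\<^sup>2"
       "(c$1 - ctr$1)\<^sup>2 + (c$2 - ctr$2)\<^sup>2 + (c$3 - (ctr$3 - h))\<^sup>2 = r\<^sup>2"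
    using assms by (auto intro!: on_sphere)
  then have "\<rho>\<^sup>2 = h\<^sup>2"
    by algebra
  then show "h = \<rho>"
    using assms by (simp add: power2_eq_iff)
qed

lemma rot_ellipsoid_is_sphere_iff:
  assumes "h > 0" "\<rho> > 0"
  shows "(\<exists>c r. rot_ellipsoid ctr h \<rho> = sphere c r) \<longleftrightarrow> h = \<rho>"
  using assms rot_ellipsoid_eq_sphere rot_ellipsoid_eq_sphere_imp_axes_eq by metis

lemma semi_axes_eq_iff:
  "\<bar>a4 - t\<bar> = sqrt ((ar - t)\<^sup>2 + ac\<^sup>2) \<longleftrightarrow> 2 * (a4 - ar) * t = a4\<^sup>2 - ac\<^sup>2 - ar\<^sup>2"
proof -
  have "\<bar>a4 - t\<bar> = sqrt ((ar - t)\<^sup>2 + ac\<^sup>2) \<longleftrightarrow> (a4 - t)\<^sup>2 = (ar - t)\<^sup>2 + ac\<^sup>2"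
    by (metis real_sqrt_abs real_sqrt_eq_iff)
  also have "\<dots> \<longleftrightarrow> 2 * (a4 - ar) * t = a4\<^sup>2 - ac\<^sup>2 - ar\<^sup>2"
    by (simp add: power2_eq_square algebra_simps) (auto simp: algebra_simps)
  finally show ?thesis .
qed

lemma Ppt_xy_mult:
  assumes "ac \<noteq> 0"
  shows "Complex (Ppt A C ar ac a4 t $ 1) (- Ppt A C ar ac a4 t $ 2) * (Complex ar (- ac) - of_real t)
           = of_real A * Complex ar (- ac)"
proof -
  have D: "(t - ar)\<^sup>2 + ac\<^sup>2 \<noteq> 0" using assms by (simp add: add_nonneg_pos)
  show ?thesis using D assms
    unfolding Ppt_def complex_eq_iff by (simp add: divide_simps) (simp add: power2_eq_square algebra_simps)
qed

lemma center_pt_eq: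
  fixes p2 p3 :: complex
  assumes hac: "ac \<noteq> 0"
    and hSM1: "let a2 = Complex ar ac; a3 = Complex ar (- ac); a4' = complex_of_real a4;
                   v = a2 + a3 - 2 * a4' in
                 p2 = complex_of_real A * a3 * v / (a3 - a4')\<^sup>2 \<and>
                 p3 = complex_of_real A * a2 * v / (a2 - a4')\<^sup>2 \<and>
                 complex_of_real p4 = - (complex_of_real C * a4' * v / ((a2 - a4') * (a3 - a4')))"
  shows "center_pt A C ar ac a4 = vec3 (Re p2) (- Im p2) p4"
proof -
  define a3 where "a3 = Complex ar (- ac)"
  have a3_neq: "a3 - of_real x \<noteq> 0" for x using hac by (simp add: a3_def complex_eq_iff)
  have v: "Complex ar ac + a3 - 2 * of_real a4 = of_real (2 * (ar - a4))"
    by (simp add: a3_def complex_eq_iff)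
  have N: "(Complex ar ac - of_real a4) * (a3 - of_real a4) = of_real ((ar - a4)\<^sup>2 + ac\<^sup>2)"
    by (simp add: a3_def complex_eq_iff power2_eq_square algebra_simps)
  have SM1: "p2 = of_real A * a3 * of_real (2 * (ar - a4)) / (a3 - of_real a4)\<^sup>2"
    "of_real p4 = - (of_real C * of_real a4 * of_real (2 * (ar - a4)) / (of_real ((ar - a4)\<^sup>2 + ac\<^sup>2) :: complex))"
    using hSM1 unfolding Let_def a3_def[symmetric] v N by blast+
  have p2: "p2 * (a3 - of_real a4)\<^sup>2 = of_real A * a3 * of_real (2 * (ar - a4))"
    using SM1(1) a3_neq[of a4] by (simp add: divide_eq_eq)
  have "p4 = - (C * a4 * (2 * (ar - a4)) / ((ar - a4)\<^sup>2 + ac\<^sup>2))"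
    using SM1(2) by (simp only: of_real_mult[symmetric] of_real_divide[symmetric] of_real_minus[symmetric] of_real_eq_iff)
  then have p4: "p4 * ((ar - a4)\<^sup>2 + ac\<^sup>2) = - C * a4 * (2 * (ar - a4))"
    using hac by (simp add: field_simps add_nonneg_pos)
  show ?thesis
  proof (cases "a4 = ar")
    case True
    then show ?thesis using p2 p4 hac a3_neq[of ar] by (simp add: center_pt_def vec_eq_iff forall_3 add_nonneg_pos)
  next
    case False
    define c where "c = (a4\<^sup>2 - ac\<^sup>2 - ar\<^sup>2) / (2 * (a4 - ar))"
    have c: "2 * (a4 - ar) * c = a4\<^sup>2 - ac\<^sup>2 - ar\<^sup>2" using False by (simp add: c_def)
    \<comment> \<open>This identity turns (SM1) into \<open>p\<^sub>2 = A a\<^sub>3 / (a\<^sub>3 - c)\<close>, the horizontal part of \<open>P\<^sub>c\<close>.\<close>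
    have "(a3 - of_real a4)\<^sup>2 = of_real (2 * (ar - a4)) * (a3 - of_real c)"
      using c by (simp add: a3_def complex_eq_iff power2_eq_square algebra_simps)
    then have "p2 * (a3 - of_real c) = of_real A * a3"
      using p2 False by (simp add: power2_eq_square mult.assoc mult.left_commute[of "of_real (2 * (ar - a4))"])
    also have "\<dots> = Complex (Ppt A C ar ac a4 c $ 1) (- Ppt A C ar ac a4 c $ 2) * (a3 - of_real c)"
      unfolding a3_def by (rule Ppt_xy_mult[OF hac, symmetric])
    finally have p2_eq: "p2 = Complex (Ppt A C ar ac a4 c $ 1) (- Ppt A C ar ac a4 c $ 2)"
      using a3_neq by simp
    have cD: "(ar - a4)\<^sup>2 + ac\<^sup>2 = 2 * (ar - a4) * (c - a4)"
      using c by (simp add: power2_eq_square algebra_simps)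
    then have "c \<noteq> a4" using hac by (auto simp: add_nonneg_pos)
    have "2 * (ar - a4) * (p4 * (a4 - c)) = 2 * (ar - a4) * (C * a4)"
      using p4 unfolding cD by (simp add: algebra_simps)
    then have "p4 * (a4 - c) = C * a4" using False by simp
    then have p4_eq: "Ppt A C ar ac a4 c $ 3 = p4"
      using \<open>c \<noteq> a4\<close> by (simp add: Ppt_def divide_eq_eq)
    have "center_pt A C ar ac a4 = Ppt A C ar ac a4 c"
      using False by (simp add: center_pt_def c_def)
    then show ?thesis
      using p2_eq p4_eq by (simp add: vec_eq_iff forall_3)
  qed
qed

lemma self_motion_pose_coords:
  assumes "in_self_motion A C ar ac a4 n d R1 p2 p3 p4 p5 Rot s" and "norm d = 1"
  obtains x y z e1 e2 e3 where
    "e1\<^sup>2 + e2\<^sup>2 + e3\<^sup>2 = 1"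
    "\<And>t. Rot *v line_pt n d ar t + s = vec3 (x + (t - ar) * e1) (y + (t - ar) * e2) (z + (t - ar) * e3)"
    "x + ac * e2 = Re p2" "ac * e1 - y = Im p2" "z + (a4 - ar) * e3 = p4"
    "(x - ar * e1 - A)\<^sup>2 + (y - ar * e2)\<^sup>2 + (z - ar * e3 - C)\<^sup>2 = R1\<^sup>2"
    "e1 * (x + (p5 - ar) * e1) + e2 * (y + (p5 - ar) * e2) + e3 * (z + (p5 - ar) * e3) = 0"
proof -
  define q where "q = Rot *v n + s"
  define e where "e = Rot *v d"
  have orth: "orthogonal_matrix Rot"
    and leg1: "(norm (Rot *v line_pt n d ar 0 + s - vec3 A 0 C))\<^sup>2 = R1\<^sup>2"
    and leg2: "(of_real (s $ 1) + cdot (Rot $ 1) (cline_pt n d ar (Complex ar ac)))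
               - \<i> * (of_real (s $ 2) + cdot (Rot $ 2) (cline_pt n d ar (Complex ar ac))) = p2"
    and leg4: "s $ 3 + (Rot $ 3) \<bullet> line_pt n d ar a4 = p4"
    and leg5: "(Rot *v d) \<bullet> (s + Rot *v (n + (p5 - ar) *\<^sub>R d)) = 0"
    using assms(1) unfolding in_self_motion_def Let_def by auto
  have image: "Rot *v line_pt n d ar t + s
      = vec3 (q$1 + (t - ar) * e$1) (q$2 + (t - ar) * e$2) (q$3 + (t - ar) * e$3)" for t
    by (simp add: line_pt_def q_def e_def vec_eq_iff forall_3 algebra_simps)
  have "norm e = 1" using norm_orthogonal_matrix_mult[OF orth] assms(2) e_def by simp
  then have unit: "(e$1)\<^sup>2 + (e$2)\<^sup>2 + (e$3)\<^sup>2 = 1"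
    using dist_vec3_sq[of e 0] by simp
  have rows: "Rot$i \<bullet> n = (Rot *v n)$i" "Rot$i \<bullet> d = e$i" for i
    by (simp_all add: matrix_vector_mul_component e_def)
  have "Complex (q$1 + ac * e$2) (ac * e$1 - q$2) = p2"
    using leg2 unfolding cdot_cline_pt rows by (simp add: q_def complex_eq_iff algebra_simps)
  then have "q$1 + ac * e$2 = Re p2" "ac * e$1 - q$2 = Im p2" by auto
  moreover have "q$3 + (a4 - ar) * e$3 = p4"
    using leg4 by (simp add: q_def line_pt_def inner_add_right rows algebra_simps)
  moreover have "(q$1 - ar * e$1 - A)\<^sup>2 + (q$2 - ar * e$2)\<^sup>2 + (q$3 - ar * e$3 - C)\<^sup>2 = R1\<^sup>2"
    using leg1 unfolding image dist_norm[symmetric] dist_vec3_sq by simp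
  moreover have "e$1 * (q$1 + (p5 - ar) * e$1) + e$2 * (q$2 + (p5 - ar) * e$2)
      + e$3 * (q$3 + (p5 - ar) * e$3) = 0"
    using leg5 by (simp add: q_def e_def inner_vec_def sum_3 algebra_simps)
  ultimately show ?thesis using that[OF unit image] by blast
qed

lemma self_motion_point_offset:
  assumes "in_self_motion A C ar ac a4 n d R1 p2 p3 p4 p5 Rot s" and "norm d = 1"
  obtains e1 e2 e3 where
    "e1\<^sup>2 + e2\<^sup>2 + e3\<^sup>2 = 1"
    "\<And>t. Rot *v line_pt n d ar t + s = vec3 (Re p2) (- Im p2) p4
        + vec3 ((t - ar) * e1 - ac * e2) ((t - ar) * e2 + ac * e1) ((t - a4) * e3)"
proof -
  obtain x y z e1 e2 e3 where unit: "e1\<^sup>2 + e2\<^sup>2 + e3\<^sup>2 = 1"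
    and image: "\<And>t. Rot *v line_pt n d ar t + s = vec3 (x + (t - ar) * e1) (y + (t - ar) * e2) (z + (t - ar) * e3)"
    and leg2: "x + ac * e2 = Re p2" "ac * e1 - y = Im p2" and leg4: "z + (a4 - ar) * e3 = p4"
    by (rule self_motion_pose_coords[OF assms]) blast
  have "Rot *v line_pt n d ar t + s = vec3 (Re p2) (- Im p2) p4
        + vec3 ((t - ar) * e1 - ac * e2) ((t - ar) * e2 + ac * e1) ((t - a4) * e3)" for t
    unfolding image leg2[symmetric] leg4[symmetric] by (simp add: vec_eq_iff forall_3 algebra_simps)
  then show ?thesis using that[OF unit] by blast
qed

lemma self_motion_on_rot_ellipsoid:
  assumes "in_self_motion A C ar ac a4 n d R1 p2 p3 p4 p5 Rot s" "norm d = 1" "ac \<noteq> 0" "t \<noteq> a4"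
  shows "Rot *v line_pt n d ar t + s
           \<in> rot_ellipsoid (vec3 (Re p2) (- Im p2) p4) \<bar>a4 - t\<bar> (sqrt ((ar - t)\<^sup>2 + ac\<^sup>2))"
proof -
  obtain e1 e2 e3 where unit: "e1\<^sup>2 + e2\<^sup>2 + e3\<^sup>2 = 1"
    and image: "\<And>t. Rot *v line_pt n d ar t + s = vec3 (Re p2) (- Im p2) p4
        + vec3 ((t - ar) * e1 - ac * e2) ((t - ar) * e2 + ac * e1) ((t - a4) * e3)"
    by (rule self_motion_point_offset[OF assms(1,2)]) blast
  have "(t - ar)\<^sup>2 + ac\<^sup>2 \<noteq> 0" using assms(3) by (simp add: add_nonneg_pos)
  then show ?thesis
    using rot_ellipsoid_memI[OF unit, of "t - a4" "t - ar" ac] assms(4)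
    by (simp add: image abs_minus_commute power2_commute)
qed

lemma self_motion_on_disc:
  assumes "in_self_motion A C ar ac a4 n d R1 p2 p3 p4 p5 Rot s" "norm d = 1"
  shows "(Rot *v line_pt n d ar a4 + s) $ 3 = p4
    \<and> dist (Rot *v line_pt n d ar a4 + s) (vec3 (Re p2) (- Im p2) p4) \<le> sqrt ((a4 - ar)\<^sup>2 + ac\<^sup>2)"
proof -
  obtain e1 e2 e3 where unit: "e1\<^sup>2 + e2\<^sup>2 + e3\<^sup>2 = 1"
    and image: "\<And>t. Rot *v line_pt n d ar t + s = vec3 (Re p2) (- Im p2) p4
        + vec3 ((t - ar) * e1 - ac * e2) ((t - ar) * e2 + ac * e1) ((t - a4) * e3)"
    by (rule self_motion_point_offset[OF assms]) blast
  show ?thesis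
    using dist_rotation_scaling_le[OF unit] by (simp add: image)
qed

lemma self_motion_on_sphere:
  assumes "norm d = 1" "ac \<noteq> 0" "t \<noteq> a4"
  shows "\<exists>\<rho>. \<forall>Rot s. in_self_motion A C ar ac a4 n d R1 p2 p3 p4 p5 Rot s \<longrightarrow>
           Rot *v line_pt n d ar t + s \<in> sphere (Ppt A C ar ac a4 t) \<rho>"
proof -
  define P where "P = Ppt A C ar ac a4 t"
  have "Complex (P$1) (- P$2) * (Complex ar (- ac) - of_real t) = of_real A * Complex ar (- ac)"
    unfolding P_def by (rule Ppt_xy_mult[OF assms(2)])
  then have P1: "P$1 * (t - ar) + P$2 * ac = - A * ar" and P2: "P$2 * (t - ar) - P$1 * ac = - A * ac"
    by (simp_all add: complex_eq_iff algebra_simps)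
  have P3: "P$3 * (t - a4) = - C * a4"
    using assms(3) by (simp add: P_def Ppt_def field_simps)
  define K where "K = R1\<^sup>2 - 2 * (Re p2 * (P$1 - A) - Im p2 * P$2 + p4 * (P$3 - C))
    + (P$1)\<^sup>2 + (P$2)\<^sup>2 + (P$3)\<^sup>2 - A\<^sup>2 - C\<^sup>2 + t\<^sup>2 - 2 * t * p5"
  have "dist P (Rot *v line_pt n d ar t + s) = sqrt K"
    if pose: "in_self_motion A C ar ac a4 n d R1 p2 p3 p4 p5 Rot s" for Rot s
  proof -
    obtain x y z e1 e2 e3 where "e1\<^sup>2 + e2\<^sup>2 + e3\<^sup>2 = 1"
      and image: "\<And>t. Rot *v line_pt n d ar t + s = vec3 (x + (t - ar) * e1) (y + (t - ar) * e2) (z + (t - ar) * e3)"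
      and "x + ac * e2 = Re p2" "ac * e1 - y = Im p2" "z + (a4 - ar) * e3 = p4"
      and "(x - ar * e1 - A)\<^sup>2 + (y - ar * e2)\<^sup>2 + (z - ar * e3 - C)\<^sup>2 = R1\<^sup>2"
      and "e1 * (x + (p5 - ar) * e1) + e2 * (y + (p5 - ar) * e2) + e3 * (z + (p5 - ar) * e3) = 0"
      by (rule self_motion_pose_coords[OF pose assms(1)]) blast
    then have "(dist P (Rot *v line_pt n d ar t + s))\<^sup>2 = K"
      unfolding dist_vec3_sq image vec3_nth K_def using P1 P2 P3 by algebra
    then show ?thesis
      by (simp add: real_sqrt_unique)
  qed
  then show ?thesis
    unfolding P_def by auto
qed

lemma self_motion_ellipsoid_is_sphere_iff:
  assumes "ac \<noteq> 0" "t \<noteq> a4" "a4 \<noteq> ar"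
  shows "(\<exists>c r. rot_ellipsoid ctr \<bar>a4 - t\<bar> (sqrt ((ar - t)\<^sup>2 + ac\<^sup>2)) = sphere c r)
           \<longleftrightarrow> t = (a4\<^sup>2 - ac\<^sup>2 - ar\<^sup>2) / (2 * (a4 - ar))"
  using assms
  by (simp add: rot_ellipsoid_is_sphere_iff add_nonneg_pos semi_axes_eq_iff eq_divide_eq mult.commute)

lemma self_motion_ellipsoid_not_sphere:
  assumes "ac \<noteq> 0" "t \<noteq> a4" "a4 = ar"
  shows "\<not> (\<exists>c r. rot_ellipsoid ctr \<bar>a4 - t\<bar> (sqrt ((ar - t)\<^sup>2 + ac\<^sup>2)) = sphere c r)"
  using assms by (simp add: rot_ellipsoid_is_sphere_iff add_nonneg_pos semi_axes_eq_iff)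

theorem mainTheorem2:
  fixes A C ar ac a4 R1 p4 p5 :: real
    and p2 p3 :: complex
    and n d :: "real^3"
  assumes hA: "A \<noteq> 0" and hac: "ac \<noteq> 0"
    and htype: "(a4 \<noteq> 0 \<and> C \<noteq> 0) \<or> (a4 = 0 \<and> C = 0)"
    and hd: "norm d = 1"
    and hSM1: "let a2 = Complex ar ac; a3 = Complex ar (- ac); a4' = complex_of_real a4;
                   v = a2 + a3 - 2 * a4' in
                 p2 = complex_of_real A * a3 * v / (a3 - a4')\<^sup>2 \<and>
                 p3 = complex_of_real A * a2 * v / (a2 - a4')\<^sup>2 \<and>
                 complex_of_real p4 = - (complex_of_real C * a4' * v / ((a2 - a4') * (a3 - a4')))"
    and hSM2: "let a2 = Complex ar ac; a3 = Complex ar (- ac); a4' = complex_of_real a4;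
                   v = a2 + a3 - 2 * a4'; w = a2 * a3 - a4'\<^sup>2 in
                 (a2 - a4')\<^sup>2 * (a3 - a4')\<^sup>2 *
                   (2 * w * complex_of_real p5 - v * complex_of_real (R1\<^sup>2) - (2 * w - v * a4') * a4')
                 + v * w\<^sup>2 * complex_of_real (A\<^sup>2 + C\<^sup>2) = 0"
  shows
    "(\<forall>t. t \<noteq> a4 \<longrightarrow>
        (\<forall>Rot s. in_self_motion A C ar ac a4 n d R1 p2 p3 p4 p5 Rot s \<longrightarrow>
           Rot *v line_pt n d ar t + s
             \<in> rot_ellipsoid (center_pt A C ar ac a4) \<bar>a4 - t\<bar> (sqrt ((ar - t)\<^sup>2 + ac\<^sup>2))) \<and>
        (\<exists>\<rho>. \<forall>Rot s. in_self_motion A C ar ac a4 n d R1 p2 p3 p4 p5 Rot s \<longrightarrow>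
           Rot *v line_pt n d ar t + s \<in> sphere (Ppt A C ar ac a4 t) \<rho>))
     \<and> (\<exists>\<rho>. \<forall>Rot s. in_self_motion A C ar ac a4 n d R1 p2 p3 p4 p5 Rot s \<longrightarrow>
           (Rot *v line_pt n d ar a4 + s) $ 3 = p4 \<and>
           dist (Rot *v line_pt n d ar a4 + s) (center_pt A C ar ac a4) \<le> \<rho>)
     \<and> (a4 \<noteq> ar \<longrightarrow>
          (\<forall>t. t \<noteq> a4 \<longrightarrow>
             ((\<exists>ctr r. rot_ellipsoid (center_pt A C ar ac a4) \<bar>a4 - t\<bar> (sqrt ((ar - t)\<^sup>2 + ac\<^sup>2))
                        = sphere ctr r)
              \<longleftrightarrow> t = (a4\<^sup>2 - ac\<^sup>2 - ar\<^sup>2) / (2 * (a4 - ar)))))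
     \<and> (a4 = ar \<longrightarrow>
          (\<forall>t. t \<noteq> a4 \<longrightarrow>
             \<not> (\<exists>ctr r. rot_ellipsoid (center_pt A C ar ac a4) \<bar>a4 - t\<bar> (sqrt ((ar - t)\<^sup>2 + ac\<^sup>2))
                        = sphere ctr r)))"
proof -
  have center: "center_pt A C ar ac a4 = vec3 (Re p2) (- Im p2) p4"
    by (rule center_pt_eq[OF hac hSM1])
  show ?thesis
    unfolding center
  proof (intro conjI)
    show "\<forall>t. t \<noteq> a4 \<longrightarrow>
        (\<forall>Rot s. in_self_motion A C ar ac a4 n d R1 p2 p3 p4 p5 Rot s \<longrightarrow>
           Rot *v line_pt n d ar t + s
             \<in> rot_ellipsoid (vec3 (Re p2) (- Im p2) p4) \<bar>a4 - t\<bar> (sqrt ((ar - t)\<^sup>2 + ac\<^sup>2))) \<and>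
        (\<exists>\<rho>. \<forall>Rot s. in_self_motion A C ar ac a4 n d R1 p2 p3 p4 p5 Rot s \<longrightarrow>
           Rot *v line_pt n d ar t + s \<in> sphere (Ppt A C ar ac a4 t) \<rho>)"
      using self_motion_on_sphere[OF hd hac] by (simp add: self_motion_on_rot_ellipsoid[OF _ hd hac])
    show "\<exists>\<rho>. \<forall>Rot s. in_self_motion A C ar ac a4 n d R1 p2 p3 p4 p5 Rot s \<longrightarrow>
           (Rot *v line_pt n d ar a4 + s) $ 3 = p4 \<and>
           dist (Rot *v line_pt n d ar a4 + s) (vec3 (Re p2) (- Im p2) p4) \<le> \<rho>"
      using self_motion_on_disc[OF _ hd] by blast
  qed (simp_all add: self_motion_ellipsoid_is_sphere_iff[OF hac] self_motion_ellipsoid_not_sphere[OF hac])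
qed

end
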